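(* Let $g$ be a symplectic potential on $P$ with $y=\partial g/\partial x$, $w_j=e^{y_j+i\theta_j}$, and $X_g=-\sum_jy_j\partial_{\theta_j}$ its Hamiltonian vector field on $\check X_P$. Then for every $m\in\mathbb Z^n$ the series $e^{iX_g}e^{im\cdot\theta}=\sum_{k\ge0}\frac{i^k}{k!}X_g^k\,e^{im\cdot\theta}$ converges and equals $w^m=w_1^{m_1}\cdots w_n^{m_n}$, and the time-$i$ flow $e^{iX_g}$ induces an algebra isomorphism from the algebra $\mathcal A$ generated by the characters $e^{im\cdot\theta}$, $m\in\mathbb Z^n$, of $\mathbb T^n$ onto the algebra generated by the $I_g$-monomial (meromorphic) functions $w^m$, $m\in\mathbb Z^n$, on $(X_P,I_g)$, sending $e^{im\cdot\theta}\mapsto w^m$.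
   Context: Let $P=\{x:\ell_j(x)=\langle\nu_j,x\rangle+\lambda_j\ge0\}$ be a Delzant polytope with interior $\check P$, $(X_P,\omega)$ the associated compact symplectic toric manifold with moment map $\mu$ and action-angle coordinates $(x,\theta)$ on $\check X_P=\mu^{-1}(\check P)\cong\check P\times\mathbb T^n$, $\omega=\sum dx^j\wedge d\theta_j$. A symplectic potential is $g=\frac12\sum\ell_j\log\ell_j+\varphi$, $\varphi\in C^\infty(P)$, with positive definite Hessian on $\check P$ and $\det H_g=(\alpha\prod\ell_j)^{-1}$ for a smooth positive $\alpha$ on $P$; it determines a toric complex structure $I_g$ on $X_P$ for which $(\check X_P,I_g)\cong(\mathbb C^* )^n$ via $(x,\theta)\mapsto w=e^{y+i\theta}$, $y=\partial g/\partial x$. *)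

theory Defs
  imports "HOL-Analysis.Analysis"
begin

definition aff :: "(nat \<Rightarrow> real^'n) \<Rightarrow> (nat \<Rightarrow> real) \<Rightarrow> nat \<Rightarrow> real^'n \<Rightarrow> real" where
  "aff nu lam j x = nu j \<bullet> x + lam j"

definition polyP :: "(nat \<Rightarrow> real^'n) \<Rightarrow> (nat \<Rightarrow> real) \<Rightarrow> nat \<Rightarrow> (real^'n) set" where
  "polyP nu lam d = {x. \<forall>j<d. aff nu lam j x \<ge> 0}"

text \<open>Delzant polytope: bounded with nonempty interior, integral normals, every
  inequality defines a facet (irredundant presentation), and at every vertex
  (point whose active normals span R^n) exactly n facets meet and their normals
  form a Z-basis of Z^n.\<close>

definition delzant :: "(nat \<Rightarrow> real^'n) \<Rightarrow> (nat \<Rightarrow> real) \<Rightarrow> nat \<Rightarrow> bool" where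
  "delzant nu lam d \<longleftrightarrow>
     bounded (polyP nu lam d) \<and> interior (polyP nu lam d) \<noteq> {} \<and>
     (\<forall>j<d. \<forall>k. nu j $ k \<in> \<int>) \<and>
     (\<forall>j<d. \<exists>x\<in>polyP nu lam d. aff nu lam j x = 0 \<and>
              (\<forall>k<d. k \<noteq> j \<longrightarrow> aff nu lam k x > 0)) \<and>
     (\<forall>v\<in>polyP nu lam d.
        let F = {j. j < d \<and> aff nu lam j v = 0} in
        span (nu ` F) = UNIV \<longrightarrow>
          card F = CARD('n) \<and>
          (\<forall>z::real^'n. (\<forall>k. z $ k \<in> \<int>) \<longrightarrow>
              (\<exists>c::nat \<Rightarrow> int. z = (\<Sum>j\<in>F. of_int (c j) *\<^sub>R nu j))))"

definition pd :: "'n::finite \<Rightarrow> (real^'n \<Rightarrow> real) \<Rightarrow> real^'n \<Rightarrow> real" where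
  "pd i f x = deriv (\<lambda>t. f (x + t *\<^sub>R axis i 1)) 0"

definition smooth_on :: "(real^'n::finite) set \<Rightarrow> (real^'n \<Rightarrow> real) \<Rightarrow> bool" where
  "smooth_on U f \<longleftrightarrow>
     (\<forall>is::'n list. continuous_on U (foldr pd is f) \<and>
        (\<forall>i. \<forall>x\<in>U. (\<lambda>t. foldr pd is f (x + t *\<^sub>R axis i 1)) differentiable (at 0)))"

definition hess :: "(real^'n::finite \<Rightarrow> real) \<Rightarrow> real^'n \<Rightarrow> real^'n^'n" where
  "hess g x = (\<chi> i j. pd i (pd j g) x)"

definition symplectic_potential ::
  "(nat \<Rightarrow> real^'n::finite) \<Rightarrow> (nat \<Rightarrow> real) \<Rightarrow> nat \<Rightarrow> (real^'n \<Rightarrow> real) \<Rightarrow> bool" where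
  "symplectic_potential nu lam d g \<longleftrightarrow>
     (\<exists>\<phi> \<alpha> U V. open U \<and> polyP nu lam d \<subseteq> U \<and> smooth_on U \<phi> \<and>
        open V \<and> polyP nu lam d \<subseteq> V \<and> smooth_on V \<alpha> \<and>
        (\<forall>x\<in>polyP nu lam d. \<alpha> x > 0) \<and>
        (\<forall>x\<in>interior (polyP nu lam d).
           g x = (1/2) * (\<Sum>j<d. aff nu lam j x * ln (aff nu lam j x)) + \<phi> x) \<and>
        (\<forall>x\<in>interior (polyP nu lam d).
           (\<forall>v. v \<noteq> 0 \<longrightarrow> v \<bullet> (hess g x *v v) > 0) \<and>
           det (hess g x) = 1 / (\<alpha> x * (\<Prod>j<d. aff nu lam j x))))"

text \<open>A point of the open dense subset is a pair (x, theta) with x in the interior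
  of P and theta in R^n (angles; functions are 2pi-periodic in theta).\<close>

definition chr :: "int^'n::finite \<Rightarrow> (real^'n) \<times> (real^'n) \<Rightarrow> complex" where
  "chr m = (\<lambda>(x, \<theta>). exp (\<i> * of_real (\<Sum>j\<in>UNIV. of_int (m $ j) * \<theta> $ j)))"

definition wcoord :: "(real^'n::finite \<Rightarrow> real^'n) \<Rightarrow> 'n \<Rightarrow> (real^'n) \<times> (real^'n) \<Rightarrow> complex" where
  "wcoord y j = (\<lambda>(x, \<theta>). exp (of_real (y x $ j) + \<i> * of_real (\<theta> $ j)))"

definition monom :: "(real^'n::finite \<Rightarrow> real^'n) \<Rightarrow> int^'n \<Rightarrow> (real^'n) \<times> (real^'n) \<Rightarrow> complex" where
  "monom y m = (\<lambda>p. \<Prod>j\<in>UNIV. (wcoord y j p) powi (m $ j))"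

definition dtheta :: "'n::finite \<Rightarrow> ((real^'n) \<times> (real^'n) \<Rightarrow> complex) \<Rightarrow> (real^'n) \<times> (real^'n) \<Rightarrow> complex" where
  "dtheta j f = (\<lambda>(x, \<theta>). vector_derivative (\<lambda>t. f (x, \<theta> + t *\<^sub>R axis j 1)) (at 0))"

definition Xham :: "(real^'n::finite \<Rightarrow> real^'n) \<Rightarrow> ((real^'n) \<times> (real^'n) \<Rightarrow> complex) \<Rightarrow> (real^'n) \<times> (real^'n) \<Rightarrow> complex" where
  "Xham y f = (\<lambda>(x, \<theta>). - (\<Sum>j\<in>UNIV. of_real (y x $ j) * dtheta j f (x, \<theta>)))"

definition expiX_term :: "(real^'n::finite \<Rightarrow> real^'n) \<Rightarrow> ((real^'n) \<times> (real^'n) \<Rightarrow> complex) \<Rightarrow> (real^'n) \<times> (real^'n) \<Rightarrow> nat \<Rightarrow> complex" where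
  "expiX_term y f p k = (\<i> ^ k / of_nat (fact k)) * ((Xham y ^^ k) f) p"

definition expiX :: "(real^'n::finite \<Rightarrow> real^'n) \<Rightarrow> ((real^'n) \<times> (real^'n) \<Rightarrow> complex) \<Rightarrow> (real^'n) \<times> (real^'n) \<Rightarrow> complex" where
  "expiX y f p = (\<Sum>k. expiX_term y f p k)"

inductive_set alg_gen :: "('a \<Rightarrow> complex) set \<Rightarrow> ('a \<Rightarrow> complex) set" for G where
  gen: "f \<in> G \<Longrightarrow> f \<in> alg_gen G"
| one: "(\<lambda>_. 1) \<in> alg_gen G"
| add: "f \<in> alg_gen G \<Longrightarrow> h \<in> alg_gen G \<Longrightarrow> (\<lambda>p. f p + h p) \<in> alg_gen G"
| smult: "f \<in> alg_gen G \<Longrightarrow> (\<lambda>p. c * f p) \<in> alg_gen G"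
| mult: "f \<in> alg_gen G \<Longrightarrow> h \<in> alg_gen G \<Longrightarrow> (\<lambda>p. f p * h p) \<in> alg_gen G"

text \<open>Restriction of a function to a domain D (zero outside), used to identify
  functions on the open dense subset interior(P) x T^n.\<close>

definition restr :: "'a set \<Rightarrow> ('a \<Rightarrow> complex) \<Rightarrow> 'a \<Rightarrow> complex" where
  "restr D f = (\<lambda>p. if p \<in> D then f p else 0)"

end

theory Submission
  imports Defs
begin

text \<open>The vector field \<open>X\<^sub>g = - \<Sum>\<^sub>j y\<^sub>j \<partial>/\<partial>\<theta>\<^sub>j\<close> acts on the character \<open>e^(i m\<cdot>\<theta>)\<close>
  as multiplication by \<open>-i m\<cdot>y\<close>, so the series for \<open>e^(iX\<^sub>g) e^(i m\<cdot>\<theta>)\<close> is the exponential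
  series of \<open>m\<cdot>y\<close> times the character, with sum \<open>e^(m\<cdot>y) e^(i m\<cdot>\<theta>) = w^m\<close>. The algebra
  generated by the characters consists of the trigonometric polynomials, on which \<open>e^(iX\<^sub>g)\<close>
  acts diagonally; as both \<open>m \<mapsto> e^(i m\<cdot>\<theta>)\<close> and \<open>m \<mapsto> w^m\<close> are monoid homomorphisms,
  the induced map is an algebra homomorphism onto the algebra generated by the monomials. It
  is injective because the characters are linearly independent as functions of \<open>\<theta>\<close> and
  the factors \<open>e^(m\<cdot>y)\<close> do not vanish. Nothing is used about \<open>y\<close> beyond its being a
  function of \<open>x\<close>; the Delzant hypothesis only provides a point of the interior of \<open>P\<close>.\<close>

definition int_inner :: "int^'n::finite \<Rightarrow> real^'n \<Rightarrow> real" where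
  "int_inner m v = (\<Sum>j\<in>UNIV. of_int (m $ j) * v $ j)"

lemma int_inner_add_left: "int_inner (a + b) v = int_inner a v + int_inner b v"
  by (simp add: int_inner_def distrib_right sum.distrib)

lemma int_inner_add_right: "int_inner m (u + v) = int_inner m u + int_inner m v"
  by (simp add: int_inner_def distrib_left sum.distrib)

lemma int_inner_axis: "int_inner m (t *\<^sub>R axis j 1) = t * of_int (m $ j)"
  by (simp add: int_inner_def axis_def if_distrib cong: if_cong)

lemma chr_eq_exp: "chr m (x, \<theta>) = exp (\<i> * of_real (int_inner m \<theta>))"
  by (simp add: chr_def int_inner_def)

lemma chr_nonzero: "chr m p \<noteq> 0"
  by (cases p) (simp add: chr_def)

lemma chr_zero: "chr 0 p = 1"
  by (cases p) (simp add: chr_def)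

lemma chr_add: "chr (a + b) p = chr a p * chr b p"
  by (cases p) (simp add: chr_eq_exp int_inner_add_left distrib_left exp_add)

lemma chr_translate: "chr m (x, \<theta> + \<phi>) = chr m (x, \<theta>) * chr m (x, \<phi>)"
  by (simp add: chr_eq_exp int_inner_add_right distrib_left exp_add)

lemma chr_axis: "chr m (x, t *\<^sub>R axis j 1) = exp (t *\<^sub>R (\<i> * of_int (m $ j)))"
  by (simp only: chr_eq_exp int_inner_axis) (simp add: scaleR_conv_of_real mult_ac)

lemma monom_eq_exp_chr: "monom y m (x, \<theta>) = exp (of_real (int_inner m (y x))) * chr m (x, \<theta>)"
  unfolding monom_def wcoord_def chr_def int_inner_def
  by (simp add: exp_power_int exp_sum[symmetric] exp_add[symmetric] sum.distrib
      algebra_simps sum_distrib_left)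

lemma monom_zero: "monom y 0 p = 1"
  by (cases p) (simp add: monom_eq_exp_chr chr_zero int_inner_def)

lemma monom_add: "monom y (a + b) p = monom y a p * monom y b p"
  by (cases p) (simp add: monom_eq_exp_chr chr_add int_inner_add_left exp_add)

definition fourier_sum ::
  "(int^'n::finite) set \<Rightarrow> (int^'n \<Rightarrow> real^'n \<Rightarrow> complex) \<Rightarrow> (real^'n) \<times> (real^'n) \<Rightarrow> complex" where
  "fourier_sum S a = (\<lambda>p. \<Sum>m\<in>S. a m (fst p) * chr m p)"

lemma dtheta_fourier_sum:
  assumes "finite S"
  shows "dtheta j (fourier_sum S a) (x, \<theta>) = (\<Sum>m\<in>S. \<i> * of_int (m $ j) * a m x * chr m (x, \<theta>))"
proof -
  have "((\<lambda>t. \<Sum>m\<in>S. a m x * chr m (x, \<theta>) * exp (t *\<^sub>R (\<i> * of_int (m $ j))))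
          has_vector_derivative
        (\<Sum>m\<in>S. a m x * chr m (x, \<theta>) * (\<i> * of_int (m $ j) * exp (0 *\<^sub>R (\<i> * of_int (m $ j))))))
        (at 0)"
    by (intro has_vector_derivative_sum has_vector_derivative_mult_right
        exp_scaleR_has_vector_derivative_left)
  then show ?thesis
    unfolding dtheta_def fourier_sum_def
    by (simp add: chr_translate chr_axis vector_derivative_at mult_ac)
qed

lemma Xham_fourier_sum:
  fixes y :: "real^'n::finite \<Rightarrow> real^'n"
  assumes "finite S"
  shows "Xham y (fourier_sum S a) =
    fourier_sum S (\<lambda>m x. - \<i> * of_real (int_inner m (y x)) * a m x)"
proof (rule ext, clarify)
  fix x \<theta> :: "real^'n"
  have "Xham y (fourier_sum S a) (x, \<theta>) =
      - (\<Sum>j\<in>UNIV. \<Sum>m\<in>S. of_real (y x $ j) * (\<i> * of_int (m $ j) * a m x * chr m (x, \<theta>)))"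
    unfolding Xham_def by (simp add: dtheta_fourier_sum[OF assms] sum_distrib_left)
  also have "\<dots> = (\<Sum>m\<in>S. - \<i> * of_real (int_inner m (y x)) * a m x * chr m (x, \<theta>))"
    unfolding int_inner_def
    by (subst sum.swap) (simp add: sum_distrib_left sum_distrib_right sum_negf[symmetric] mult_ac)
  finally show "Xham y (fourier_sum S a) (x, \<theta>) =
      fourier_sum S (\<lambda>m x. - \<i> * of_real (int_inner m (y x)) * a m x) (x, \<theta>)"
    by (simp add: fourier_sum_def)
qed

lemma Xham_power_fourier_sum:
  assumes "finite S"
  shows "(Xham y ^^ k) (fourier_sum S a) =
    fourier_sum S (\<lambda>m x. (- \<i> * of_real (int_inner m (y x))) ^ k * a m x)"
  by (induction k) (simp_all add: Xham_fourier_sum[OF assms] mult_ac)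

lemma expiX_term_fourier_sum:
  assumes "finite S"
  shows "expiX_term y (fourier_sum S a) (x, \<theta>) k =
    (\<Sum>m\<in>S. a m x * chr m (x, \<theta>) * (of_real (int_inner m (y x)) ^ k /\<^sub>R fact k))"
proof -
  have "\<i> ^ k / of_nat (fact k) * ((- \<i> * z) ^ k * c) = c * (z ^ k /\<^sub>R fact k)" for z c :: complex
  proof -
    have "\<i> ^ k * (- \<i> * z) ^ k = z ^ k"
      by (simp add: power_mult_distrib[symmetric])
    then show ?thesis
      by (simp add: scaleR_conv_of_real divide_inverse mult_ac)
  qed
  then show ?thesis
    unfolding expiX_term_def Xham_power_fourier_sum[OF assms]
    unfolding fourier_sum_def sum_distrib_left
    by (simp add: mult.assoc)
qed

lemma expiX_fourier_sum_sums:
  assumes "finite S"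
  shows "expiX_term y (fourier_sum S a) p sums (\<Sum>m\<in>S. a m (fst p) * monom y m p)"
proof (cases p)
  case (Pair x \<theta>)
  have "(\<lambda>k. \<Sum>m\<in>S. a m x * chr m (x, \<theta>) * (of_real (int_inner m (y x)) ^ k /\<^sub>R fact k)) sums
        (\<Sum>m\<in>S. a m x * chr m (x, \<theta>) * exp (of_real (int_inner m (y x))))"
    by (intro sums_sum sums_mult exp_converges)
  then show ?thesis
    unfolding Pair expiX_term_fourier_sum[OF assms] by (simp add: monom_eq_exp_chr mult_ac)
qed

definition lin_comb :: "('m \<Rightarrow> 'p \<Rightarrow> complex) \<Rightarrow> 'm set \<Rightarrow> ('m \<Rightarrow> complex) \<Rightarrow> 'p \<Rightarrow> complex" where
  "lin_comb X S c = (\<lambda>p. \<Sum>m\<in>S. c m * X m p)"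

lemma lin_comb_zero_ext:
  assumes "finite T" "S \<subseteq> T"
  shows "lin_comb X S c = lin_comb X T (\<lambda>m. if m \<in> S then c m else 0)"
proof
  fix p
  have "(\<Sum>m\<in>T. (if m \<in> S then c m else 0) * X m p) = (\<Sum>m\<in>T. if m \<in> S then c m * X m p else 0)"
    by (rule sum.cong) auto
  also have "\<dots> = (\<Sum>m\<in>S. c m * X m p)"
    using assms by (simp add: sum.inter_restrict[symmetric] Int_absorb1)
  finally show "lin_comb X S c p = lin_comb X T (\<lambda>m. if m \<in> S then c m else 0) p"
    by (simp add: lin_comb_def)
qed

lemma lin_comb_add:
  assumes "finite S1" "finite S2"
  shows "(\<lambda>p. lin_comb X S1 c1 p + lin_comb X S2 c2 p) =
    lin_comb X (S1 \<union> S2) (\<lambda>m. (if m \<in> S1 then c1 m else 0) + (if m \<in> S2 then c2 m else 0))"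
proof -
  have "lin_comb X S1 c1 = lin_comb X (S1 \<union> S2) (\<lambda>m. if m \<in> S1 then c1 m else 0)"
    and "lin_comb X S2 c2 = lin_comb X (S1 \<union> S2) (\<lambda>m. if m \<in> S2 then c2 m else 0)"
    using assms by (auto intro: lin_comb_zero_ext)
  then show ?thesis
    by (simp add: lin_comb_def sum.distrib distrib_right)
qed

lemma lin_comb_scale: "(\<lambda>p. c * lin_comb X S c1 p) = lin_comb X S (\<lambda>m. c * c1 m)"
  by (simp add: lin_comb_def sum_distrib_left mult_ac)

lemma lin_comb_mult:
  fixes X :: "'m::plus \<Rightarrow> 'p \<Rightarrow> complex"
  assumes "finite S1" "finite S2" and hom: "\<And>a b p. X (a + b) p = X a p * X b p"
  shows "(\<lambda>p. lin_comb X S1 c1 p * lin_comb X S2 c2 p) =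
    lin_comb X ((\<lambda>(a, b). a + b) ` (S1 \<times> S2))
      (\<lambda>m. \<Sum>(a, b)\<in>{(a, b) \<in> S1 \<times> S2. a + b = m}. c1 a * c2 b)"
proof
  fix p
  let ?s = "\<lambda>(a, b). a + b"
  have "lin_comb X S1 c1 p * lin_comb X S2 c2 p = (\<Sum>(a, b)\<in>S1 \<times> S2. c1 a * c2 b * X (a + b) p)"
    by (simp add: lin_comb_def sum_product sum.cartesian_product hom mult_ac)
  also have "\<dots> = (\<Sum>m\<in>?s ` (S1 \<times> S2). \<Sum>(a, b)\<in>{q \<in> S1 \<times> S2. ?s q = m}. c1 a * c2 b * X (a + b) p)"
    using assms by (intro sum.image_gen) simp
  also have "\<dots> = (\<Sum>m\<in>?s ` (S1 \<times> S2). (\<Sum>(a, b)\<in>{(a, b) \<in> S1 \<times> S2. a + b = m}. c1 a * c2 b) * X m p)"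
    unfolding sum_distrib_right by (intro sum.cong refl) (auto simp: case_prod_beta)
  finally show "lin_comb X S1 c1 p * lin_comb X S2 c2 p =
      lin_comb X (?s ` (S1 \<times> S2)) (\<lambda>m. \<Sum>(a, b)\<in>{(a, b) \<in> S1 \<times> S2. a + b = m}. c1 a * c2 b) p"
    by (simp add: lin_comb_def)
qed

lemma lin_comb_in_alg_gen:
  assumes "finite S" "X ` S \<subseteq> G"
  shows "lin_comb X S c \<in> alg_gen G"
  using assms
proof (induction S rule: finite_induct)
  case empty
  have "(\<lambda>p. 0 * (\<lambda>_. 1) p) \<in> alg_gen G"
    by (rule alg_gen.smult[OF alg_gen.one])
  then show ?case by (simp add: lin_comb_def)
next
  case (insert m S)
  have "(\<lambda>p. c m * X m p + lin_comb X S c p) \<in> alg_gen G"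
    using insert by (intro alg_gen.add[OF alg_gen.smult[OF alg_gen.gen]]) auto
  then show ?case using insert by (simp add: lin_comb_def)
qed

lemma alg_gen_range_hom_eq:
  fixes X :: "'m::comm_monoid_add \<Rightarrow> 'p \<Rightarrow> complex"
  assumes zero: "\<And>p. X 0 p = 1" and hom: "\<And>a b p. X (a + b) p = X a p * X b p"
  shows "alg_gen (range X) = {lin_comb X S c | S c. finite S}"
proof
  show "{lin_comb X S c | S c. finite S} \<subseteq> alg_gen (range X)"
    by (auto intro: lin_comb_in_alg_gen)
next
  show "alg_gen (range X) \<subseteq> {lin_comb X S c | S c. finite S}"
  proof
    fix f assume "f \<in> alg_gen (range X)"
    then show "f \<in> {lin_comb X S c | S c. finite S}"
    proof (induction rule: alg_gen.induct)
      case (gen f)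
      then obtain m where "f = lin_comb X {m} (\<lambda>_. 1)"
        by (auto simp: lin_comb_def)
      then show ?case by blast
    next
      case one
      have "(\<lambda>_. 1) = lin_comb X {0} (\<lambda>_. 1)"
        by (simp add: lin_comb_def zero)
      then show ?case by blast
    next
      case (add f h)
      then obtain S1 c1 S2 c2 where "finite S1" "f = lin_comb X S1 c1" "finite S2" "h = lin_comb X S2 c2"
        by blast
      then show ?case
        using lin_comb_add[of S1 S2 X c1 c2] by blast
    next
      case (smult f c)
      then obtain S c1 where "finite S" "f = lin_comb X S c1"
        by blast
      then show ?case
        using lin_comb_scale[of c X S c1] by blast
    next
      case (mult f h)
      then obtain S1 c1 S2 c2 where "finite S1" "f = lin_comb X S1 c1" "finite S2" "h = lin_comb X S2 c2"
        by blast
      then show ?case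
        using lin_comb_mult[of S1 S2 X c1 c2, OF _ _ hom] by blast
    qed
  qed
qed

lemma alg_gen_chr_eq: "alg_gen (range chr) = {lin_comb chr S c | S c. finite S}"
  by (rule alg_gen_range_hom_eq) (simp_all add: chr_zero chr_add)

lemma alg_gen_monom_eq: "alg_gen (range (monom y)) = {lin_comb (monom y) S c | S c. finite S}"
  by (rule alg_gen_range_hom_eq) (simp_all add: monom_zero monom_add)

lemma expiX_term_lin_comb_chr_sums:
  assumes "finite S"
  shows "expiX_term y (lin_comb chr S c) p sums lin_comb (monom y) S c p"
proof -
  have "lin_comb chr S c = fourier_sum S (\<lambda>m _. c m)"
    by (simp add: lin_comb_def fourier_sum_def)
  then show ?thesis
    using expiX_fourier_sum_sums[OF assms, of y "\<lambda>m _. c m" p] by (simp add: lin_comb_def)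
qed

lemma expiX_lin_comb_chr:
  assumes "finite S"
  shows "expiX y (lin_comb chr S c) = lin_comb (monom y) S c"
  using expiX_term_lin_comb_chr_sums[OF assms] by (auto simp: expiX_def sums_iff)

lemma summable_expiX_term:
  assumes "f \<in> alg_gen (range chr)"
  shows "summable (expiX_term y f p)"
  using assms expiX_term_lin_comb_chr_sums unfolding alg_gen_chr_eq by (blast intro: sums_summable)

lemma expiX_chr: "expiX y (chr m) = monom y m"
proof -
  have "chr m = lin_comb chr {m} (\<lambda>_. 1)" and "monom y m = lin_comb (monom y) {m} (\<lambda>_. 1)"
    by (simp_all add: lin_comb_def)
  then show ?thesis by (simp add: expiX_lin_comb_chr)
qed

lemma expiX_one: "expiX y (\<lambda>_. 1) = (\<lambda>_. 1)"
proof -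
  have "(\<lambda>_. 1) = chr 0" "(\<lambda>_. 1) = monom y 0"
    by (simp_all add: fun_eq_iff chr_zero monom_zero)
  then show ?thesis
    using expiX_chr[of y 0] by metis
qed

lemma expiX_add:
  assumes "f \<in> alg_gen (range chr)" "h \<in> alg_gen (range chr)"
  shows "expiX y (\<lambda>p. f p + h p) = (\<lambda>p. expiX y f p + expiX y h p)"
proof -
  obtain S1 c1 S2 c2 where "finite S1" "f = lin_comb chr S1 c1" "finite S2" "h = lin_comb chr S2 c2"
    using assms unfolding alg_gen_chr_eq by blast
  then show ?thesis
    by (simp add: lin_comb_add expiX_lin_comb_chr)
qed

lemma expiX_scale:
  assumes "f \<in> alg_gen (range chr)"
  shows "expiX y (\<lambda>p. c * f p) = (\<lambda>p. c * expiX y f p)"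
proof -
  obtain S c1 where "finite S" "f = lin_comb chr S c1"
    using assms unfolding alg_gen_chr_eq by blast
  then show ?thesis
    by (simp add: lin_comb_scale expiX_lin_comb_chr)
qed

lemma expiX_mult:
  assumes "f \<in> alg_gen (range chr)" "h \<in> alg_gen (range chr)"
  shows "expiX y (\<lambda>p. f p * h p) = (\<lambda>p. expiX y f p * expiX y h p)"
proof -
  obtain S1 c1 S2 c2 where "finite S1" "f = lin_comb chr S1 c1" "finite S2" "h = lin_comb chr S2 c2"
    using assms unfolding alg_gen_chr_eq by blast
  then show ?thesis
    by (simp add: lin_comb_mult[OF _ _ chr_add] lin_comb_mult[OF _ _ monom_add] expiX_lin_comb_chr)
qed

lemma image_expiX_alg_gen: "expiX y ` alg_gen (range chr) = alg_gen (range (monom y))"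
  unfolding alg_gen_chr_eq alg_gen_monom_eq by (force simp: expiX_lin_comb_chr)

lemma chr_separates:
  fixes m m' :: "int^'n::finite"
  assumes "m \<noteq> m'"
  obtains \<theta> where "chr m (x, \<theta>) \<noteq> chr m' (x, \<theta>)"
proof -
  obtain j where j: "m $ j \<noteq> m' $ j"
    using assms by (metis vec_eq_iff)
  define t where "t = pi / of_int ((m - m') $ j)"
  have "chr (m - m') (x, t *\<^sub>R axis j 1) = exp (t *\<^sub>R (\<i> * of_int ((m - m') $ j)))"
    by (rule chr_axis)
  also have "t *\<^sub>R (\<i> * of_int ((m - m') $ j)) = \<i> * of_real pi"
    using j by (simp add: t_def scaleR_conv_of_real field_simps)
  also have "exp (\<i> * of_real pi) = -1"
    by (simp add: exp_Euler)
  finally have "chr m (x, t *\<^sub>R axis j 1) = - chr m' (x, t *\<^sub>R axis j 1)"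
    using chr_add[of "m - m'" m'] by simp
  then show ?thesis
    using chr_nonzero[of m' "(x, t *\<^sub>R axis j 1)"] by (intro that[of "t *\<^sub>R axis j 1"]) auto
qed

text \<open>Translating a vanishing sum by \<open>\<phi>\<close> and subtracting \<open>chr m\<^sub>0 (x, \<phi>)\<close> times the
  original eliminates the frequency \<open>m\<^sub>0\<close>; by induction the remaining coefficients
  \<open>c m (chr m - chr m\<^sub>0)(x, \<phi>)\<close> vanish, and \<open>\<phi>\<close> can be chosen to separate \<open>m\<close> from \<open>m\<^sub>0\<close>.\<close>

lemma chr_linearly_independent:
  fixes S :: "(int^'n::finite) set"
  assumes "finite S" "\<forall>\<theta>. (\<Sum>m\<in>S. c m * chr m (x, \<theta>)) = 0"
  shows "\<forall>m\<in>S. c m = 0"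
  using assms
proof (induction S arbitrary: c rule: finite_induct)
  case empty
  then show ?case by simp
next
  case (insert m0 S)
  have rel: "c m0 * chr m0 (x, \<theta>) + (\<Sum>m\<in>S. c m * chr m (x, \<theta>)) = 0" for \<theta>
    using insert.prems insert.hyps by simp
  have diff: "\<forall>m\<in>S. c m * (chr m (x, \<phi>) - chr m0 (x, \<phi>)) = 0" for \<phi>
  proof (rule insert.IH, rule allI)
    fix \<theta>
    have shifted: "c m0 * chr m0 (x, \<theta>) * chr m0 (x, \<phi>) + (\<Sum>m\<in>S. c m * chr m (x, \<theta>) * chr m (x, \<phi>)) = 0"
      using rel[of "\<theta> + \<phi>"] by (simp add: chr_translate mult_ac)
    have scaled: "c m0 * chr m0 (x, \<theta>) * chr m0 (x, \<phi>) + (\<Sum>m\<in>S. c m * chr m (x, \<theta>) * chr m0 (x, \<phi>)) = 0"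
      using arg_cong[OF rel[of \<theta>], of "\<lambda>z. z * chr m0 (x, \<phi>)"]
      by (simp add: distrib_right sum_distrib_right)
    have "(\<Sum>m\<in>S. c m * (chr m (x, \<phi>) - chr m0 (x, \<phi>)) * chr m (x, \<theta>)) =
        (\<Sum>m\<in>S. c m * chr m (x, \<theta>) * chr m (x, \<phi>)) - (\<Sum>m\<in>S. c m * chr m (x, \<theta>) * chr m0 (x, \<phi>))"
      by (simp add: sum_subtractf[symmetric] algebra_simps)
    also have "\<dots> = 0"
      using shifted scaled by (simp add: eq_neg_iff_add_eq_0[symmetric] algebra_simps)
    finally show "(\<Sum>m\<in>S. c m * (chr m (x, \<phi>) - chr m0 (x, \<phi>)) * chr m (x, \<theta>)) = 0" .
  qed
  have "c m = 0" if "m \<in> S" for m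
  proof -
    obtain \<phi> where "chr m (x, \<phi>) \<noteq> chr m0 (x, \<phi>)"
      using \<open>m \<in> S\<close> insert.hyps chr_separates[of m m0] by blast
    then show ?thesis using diff[of \<phi>] \<open>m \<in> S\<close> by auto
  qed
  moreover have "c m0 = 0"
    using rel[of 0] calculation chr_nonzero[of m0 "(x, 0)"] by simp
  ultimately show ?case by simp
qed

lemma expiX_eq_imp_eq:
  assumes "f \<in> alg_gen (range chr)" "h \<in> alg_gen (range chr)"
    and "\<And>\<theta>. expiX y f (x, \<theta>) = expiX y h (x, \<theta>)"
  shows "f = h"
proof -
  obtain S1 c1 S2 c2 where S: "finite S1" "f = lin_comb chr S1 c1" "finite S2" "h = lin_comb chr S2 c2"
    using assms(1,2) unfolding alg_gen_chr_eq by blast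
  define U where "U = S1 \<union> S2"
  define d1 where "d1 = (\<lambda>m. if m \<in> S1 then c1 m else 0)"
  define d2 where "d2 = (\<lambda>m. if m \<in> S2 then c2 m else 0)"
  have U: "finite U" "f = lin_comb chr U d1" "h = lin_comb chr U d2"
    using S lin_comb_zero_ext[of U S1 chr c1] lin_comb_zero_ext[of U S2 chr c2]
    by (auto simp: U_def d1_def d2_def)
  have "\<forall>\<theta>. (\<Sum>m\<in>U. ((d1 m - d2 m) * exp (of_real (int_inner m (y x)))) * chr m (x, \<theta>)) = 0"
    using assms(3) unfolding U(2,3) expiX_lin_comb_chr[OF U(1)]
    by (simp add: lin_comb_def monom_eq_exp_chr sum_subtractf algebra_simps)
  from chr_linearly_independent[OF \<open>finite U\<close> this] have "\<forall>m\<in>U. d1 m = d2 m"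
    by simp
  then show "f = h"
    using U by (simp add: lin_comb_def)
qed

theorem mainTheorem6:
  fixes nu :: "nat \<Rightarrow> real^'n" and lam :: "nat \<Rightarrow> real" and d :: nat
    and g :: "real^'n \<Rightarrow> real" and y :: "real^'n \<Rightarrow> real^'n"
  assumes "delzant nu lam d"
    and "symplectic_potential nu lam d g"
    and "\<forall>x\<in>interior (polyP nu lam d). (g has_derivative (\<lambda>h. y x \<bullet> h)) (at x)"
  defines "D \<equiv> interior (polyP nu lam d) \<times> (UNIV :: (real^'n) set)"
  shows "(\<forall>m. \<forall>p\<in>D. summable (expiX_term y (chr m) p) \<and>
              expiX y (chr m) p = monom y m p)
       \<and> (\<forall>f\<in>alg_gen (range chr). \<forall>p\<in>D. summable (expiX_term y f p))
       \<and> bij_betw (\<lambda>f. restr D (expiX y f)) (alg_gen (range chr))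
                  (restr D ` alg_gen (range (monom y)))
       \<and> (\<forall>f\<in>alg_gen (range chr). \<forall>h\<in>alg_gen (range chr).
             restr D (expiX y (\<lambda>p. f p + h p)) = (\<lambda>p. restr D (expiX y f) p + restr D (expiX y h) p)
           \<and> restr D (expiX y (\<lambda>p. f p * h p)) = (\<lambda>p. restr D (expiX y f) p * restr D (expiX y h) p))
       \<and> (\<forall>f\<in>alg_gen (range chr). \<forall>c.
             restr D (expiX y (\<lambda>p. c * f p)) = (\<lambda>p. c * restr D (expiX y f) p))
       \<and> restr D (expiX y (\<lambda>_. 1)) = restr D (\<lambda>_. 1)
       \<and> (\<forall>m. restr D (expiX y (chr m)) = restr D (monom y m))"
proof -
  have chr_in: "chr m \<in> alg_gen (range chr)" for m
    by (rule alg_gen.gen) simp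
  obtain x0 where "x0 \<in> interior (polyP nu lam d)"
    using assms(1) unfolding delzant_def by blast
  then have x0: "(x0, \<theta>) \<in> D" for \<theta>
    by (simp add: D_def)
  have "inj_on (\<lambda>f. restr D (expiX y f)) (alg_gen (range chr))"
  proof (rule inj_onI)
    fix f h
    assume "f \<in> alg_gen (range chr)" "h \<in> alg_gen (range chr)"
      and eq: "restr D (expiX y f) = restr D (expiX y h)"
    then show "f = h"
    proof (intro expiX_eq_imp_eq[of f h y x0])
      fix \<theta>
      show "expiX y f (x0, \<theta>) = expiX y h (x0, \<theta>)"
        using fun_cong[OF eq, of "(x0, \<theta>)"] x0[of \<theta>] by (simp add: restr_def)
    qed
  qed
  moreover have "(\<lambda>f. restr D (expiX y f)) ` alg_gen (range chr) = restr D ` alg_gen (range (monom y))"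
    by (simp flip: image_expiX_alg_gen add: image_image)
  ultimately show ?thesis
    by (auto simp: bij_betw_def summable_expiX_term chr_in expiX_chr expiX_add expiX_mult
        expiX_scale expiX_one restr_def fun_eq_iff)
qed

end
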